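(* Let $G=(\mathbb Z/a_1\mathbb Z)\times\dots\times(\mathbb Z/a_r\mathbb Z)$ be a finite Abelian group and let $f,g:G\to\mathbb C$. Suppose that $\widehat f$ is nowhere zero or $\widehat g$ is nowhere zero, and that $M_n(f;x_1,\dots,x_{n-1})=M_n(g;x_1,\dots,x_{n-1})$ for all $n\in\{1,2,3\}$ and all $x_1,\dots,x_{n-1}\in G$. Then there exists $y\in G$ with $g(x)=f(x+y)$ for all $x\in G$.
   Context: Elements of $G$ are tuples $x=(x[1],\dots,x[r])$ with componentwise addition modulo $a_k$. Define $\chi(x,y)=\exp\left(2\pi i\sum_{k=1}^r \frac{x[k]y[k]}{a_k}\right)$. The discrete Fourier transform of $f$ is $\widehat f(x)=\sum_{y\in G}f(y)\overline{\chi(x,y)}$. The $n$-th autocorrelation is $M_n(f;x_1,\dots,x_{n-1})=\sum_{y\in G}f(y)f(y+x_1)\cdots f(y+x_{n-1})$. *)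

theory Defs
  imports Complex_Main
begin

text \<open>The group G = Z/a_0 x ... x Z/a_(r-1) (indices shifted to 0..r-1).
  Elements are functions nat => nat with x k < a k for k < r and x k = 0 for k >= r.\<close>

definition grp :: "nat \<Rightarrow> (nat \<Rightarrow> nat) \<Rightarrow> (nat \<Rightarrow> nat) set" where
  "grp r a = {x. (\<forall>k<r. x k < a k) \<and> (\<forall>k\<ge>r. x k = 0)}"

definition gadd :: "nat \<Rightarrow> (nat \<Rightarrow> nat) \<Rightarrow> (nat \<Rightarrow> nat) \<Rightarrow> (nat \<Rightarrow> nat) \<Rightarrow> (nat \<Rightarrow> nat)" where
  "gadd r a x y = (\<lambda>k. if k < r then (x k + y k) mod a k else 0)"

definition chr :: "nat \<Rightarrow> (nat \<Rightarrow> nat) \<Rightarrow> (nat \<Rightarrow> nat) \<Rightarrow> (nat \<Rightarrow> nat) \<Rightarrow> complex" where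
  "chr r a x y = exp (2 * of_real pi * \<i> * of_real (\<Sum>k<r. real (x k * y k) / real (a k)))"

definition dft :: "nat \<Rightarrow> (nat \<Rightarrow> nat) \<Rightarrow> ((nat \<Rightarrow> nat) \<Rightarrow> complex) \<Rightarrow> (nat \<Rightarrow> nat) \<Rightarrow> complex" where
  "dft r a f x = (\<Sum>y\<in>grp r a. f y * cnj (chr r a x y))"

text \<open>n-th autocorrelation; the list xs = [x_1,...,x_(n-1)] has length n-1.\<close>
definition autocorr :: "nat \<Rightarrow> (nat \<Rightarrow> nat) \<Rightarrow> ((nat \<Rightarrow> nat) \<Rightarrow> complex) \<Rightarrow> (nat \<Rightarrow> nat) list \<Rightarrow> complex" where
  "autocorr r a f xs = (\<Sum>y\<in>grp r a. f y * prod_list (map (\<lambda>x. f (gadd r a y x)) xs))"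

end

theory Submission
  imports Defs "HOL-Analysis.Complex_Transcendental"
begin

text \<open>The first autocorrelation is \<open>f\<^sup>^(0)\<close>, and the double Fourier transform of the third
  autocorrelation is the bispectrum \<open>f\<^sup>^(\<xi>\<^sub>1) f\<^sup>^(\<xi>\<^sub>2) f\<^sup>^(-\<xi>\<^sub>1-\<xi>\<^sub>2)\<close>. If \<open>f\<^sup>^\<close> vanishes nowhere, equal bispectra force \<open>u = g\<^sup>^/f\<^sup>^\<close> to be
  multiplicative with \<open>u(0) = 1\<close>. Such a \<open>u\<close> is a character \<open>\<chi>(-,y)\<close>: otherwise every
  \<open>u \<chi>(-,y)\<^sup>*\<close> is a nontrivial multiplicative function, whose sum over \<open>G\<close> vanishes, so the
  Fourier transform of \<open>u\<close> vanishes identically, contradicting \<open>u(0) = 1\<close> by Fourier inversion.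
  Finally \<open>g\<^sup>^ = \<chi>(-,y) f\<^sup>^\<close> is the transform of the translate \<open>f(- + y)\<close>.\<close>

definition gzero :: "nat \<Rightarrow> nat" where
  "gzero = (\<lambda>_. 0)"

definition gneg :: "nat \<Rightarrow> (nat \<Rightarrow> nat) \<Rightarrow> (nat \<Rightarrow> nat) \<Rightarrow> (nat \<Rightarrow> nat)" where
  "gneg r a x = (\<lambda>k. if k < r then (a k - x k) mod a k else 0)"

lemma exp_2pi_i_of_nat: "exp (2 * of_real pi * \<i> * of_nat N) = (1::complex)"
  using exp_integer_2pi[of "of_nat N"] by (simp add: mult_ac)

locale cyclic_product =
  fixes r :: nat and a :: "nat \<Rightarrow> nat"
  assumes moduli_pos: "\<forall>k<r. a k > 0"
begin

abbreviation "G \<equiv> grp r a"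
abbreviation "add \<equiv> gadd r a"
abbreviation "neg \<equiv> gneg r a"

lemma finite_grp: "finite G"
proof (rule finite_subset)
  show "G \<subseteq> {x. \<forall>k. (k \<in> {..<r} \<longrightarrow> x k \<in> (\<Union>j<r. {..<a j})) \<and> (k \<notin> {..<r} \<longrightarrow> x k = 0)}"
    by (auto simp: grp_def)
qed (intro finite_set_of_finite_funs; simp)

lemma gzero_in_grp: "gzero \<in> G"
  using moduli_pos by (auto simp: grp_def gzero_def)

lemma gadd_in_grp: "add x y \<in> G"
  using moduli_pos by (auto simp: grp_def gadd_def)

lemma gneg_in_grp: "neg x \<in> G"
  using moduli_pos by (auto simp: grp_def gneg_def)

lemma gadd_commute: "add x y = add y x"
  by (auto simp: gadd_def add.commute)

lemma gadd_assoc: "add (add x y) z = add x (add y z)"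
  by (auto simp: gadd_def mod_add_left_eq mod_add_right_eq add.assoc)

lemma gadd_gzero: "x \<in> G \<Longrightarrow> add x gzero = x"
  by (auto simp: gadd_def gzero_def grp_def)

lemma gadd_gneg: "x \<in> G \<Longrightarrow> add x (neg x) = gzero"
proof (rule ext)
  fix k assume x: "x \<in> G"
  show "add x (neg x) k = gzero k"
  proof (cases "k < r")
    case True
    then have "x k < a k" using x by (auto simp: grp_def)
    then have "(x k + (a k - x k) mod a k) mod a k = 0"
      by (simp add: mod_add_right_eq)
    then show ?thesis using True by (simp add: gadd_def gneg_def gzero_def)
  qed (simp add: gadd_def gzero_def)
qed

lemma gadd_gneg_cancel: "x \<in> G \<Longrightarrow> y \<in> G \<Longrightarrow> add (add x (neg y)) y = x"
  by (metis gadd_assoc gadd_commute gadd_gneg gadd_gzero)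

lemma gadd_gneg_eq_gzero_iff: "x \<in> G \<Longrightarrow> y \<in> G \<Longrightarrow> add x (neg y) = gzero \<longleftrightarrow> x = y"
  by (metis gadd_gneg gadd_gneg_cancel gadd_commute gadd_gzero gzero_in_grp)

lemma sum_grp_translate:
  assumes "t \<in> G"
  shows "(\<Sum>x\<in>G. h (add x t)) = (\<Sum>x\<in>G. h x)"
  by (rule sum.reindex_bij_witness[of _ "\<lambda>x. add x (neg t)" "\<lambda>x. add x t"])
     (use assms in \<open>auto simp: gadd_in_grp gadd_gneg_cancel\<close>,
      metis gadd_assoc gadd_commute gadd_gneg gadd_gzero gneg_in_grp)

lemma sum_grp_mult_hom_eq_0:
  assumes hom: "\<forall>x\<in>G. \<forall>y\<in>G. u (add x y) = u x * (u y :: complex)"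
    and "t \<in> G" and "u t \<noteq> 1"
  shows "(\<Sum>x\<in>G. u x) = 0"
proof -
  have "(\<Sum>x\<in>G. u x) = (\<Sum>x\<in>G. u (add x t))"
    by (rule sum_grp_translate[OF \<open>t \<in> G\<close>, of u, symmetric])
  also have "\<dots> = (\<Sum>x\<in>G. u x) * u t"
    using hom \<open>t \<in> G\<close> by (simp add: sum_distrib_right)
  finally have "(\<Sum>x\<in>G. u x) * (1 - u t) = 0"
    by (simp add: algebra_simps)
  with \<open>u t \<noteq> 1\<close> show ?thesis by simp
qed

lemma chr_gadd_right: "chr r a x (add y z) = chr r a x y * chr r a x z"
proof -
  define N where "N = (\<Sum>k<r. x k * ((y k + z k) div a k))"
  have term_eq: "real (x k * add y z k) / real (a k) =
      real (x k * y k) / real (a k) + real (x k * z k) / real (a k) - real (x k * ((y k + z k) div a k))"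
    if "k < r" for k
  proof -
    have "a k > 0" using moduli_pos \<open>k < r\<close> by auto
    have "real (y k + z k) = real (a k) * real ((y k + z k) div a k) + real ((y k + z k) mod a k)"
      by (metis div_mult_mod_eq mult.commute of_nat_add of_nat_mult)
    then have "real (x k) * real (y k) + real (x k) * real (z k) =
        real (x k) * real ((y k + z k) mod a k) + real (a k) * (real (x k) * real ((y k + z k) div a k))"
      by (simp add: algebra_simps flip: distrib_left)
    with \<open>a k > 0\<close> \<open>k < r\<close> show ?thesis
      by (simp add: gadd_def field_simps)
  qed
  have "(\<Sum>k<r. real (x k * add y z k) / real (a k)) = (\<Sum>k<r.
      real (x k * y k) / real (a k) + real (x k * z k) / real (a k) - real (x k * ((y k + z k) div a k)))"
    by (rule sum.cong[OF refl], rule term_eq) simp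
  also have "\<dots> =
      (\<Sum>k<r. real (x k * y k) / real (a k)) + (\<Sum>k<r. real (x k * z k) / real (a k)) - real N"
    by (simp only: N_def sum.distrib sum_subtractf of_nat_sum)
  finally have "(\<Sum>k<r. real (x k * add y z k) / real (a k)) =
      (\<Sum>k<r. real (x k * y k) / real (a k)) + (\<Sum>k<r. real (x k * z k) / real (a k)) - real N" .
  then show ?thesis
    unfolding chr_def
    by (simp only: of_real_add of_real_diff of_real_of_nat_eq distrib_left right_diff_distrib
        exp_add exp_diff exp_2pi_i_of_nat div_by_1)
qed

lemma chr_commute: "chr r a x y = chr r a y x"
  by (simp add: chr_def mult.commute)

lemma chr_gadd_left: "chr r a (add x y) z = chr r a x z * chr r a y z"
  by (metis chr_commute chr_gadd_right)

lemma chr_gzero_right [simp]: "chr r a x gzero = 1"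
  by (simp add: chr_def gzero_def)

lemma chr_gzero_left [simp]: "chr r a gzero x = 1"
  by (simp add: chr_def gzero_def)

lemma norm_chr [simp]: "norm (chr r a x y) = 1"
  by (simp add: chr_def norm_exp)

lemma cnj_chr_mult [simp]: "cnj (chr r a x y) * chr r a x y = 1"
  by (metis complex_norm_square mult.commute norm_chr of_real_1 power_one)

lemma chr_mult_cnj_chr [simp]: "chr r a x y * cnj (chr r a x y) = 1"
  using cnj_chr_mult by (simp add: mult.commute)

lemma chr_gneg_right: "y \<in> G \<Longrightarrow> chr r a x (neg y) = cnj (chr r a x y)"
  by (metis chr_gadd_right chr_gzero_right gadd_commute gadd_gneg mult_cancel_right
      cnj_chr_mult norm_chr zero_neq_one norm_zero)

lemma chr_gneg_left: "x \<in> G \<Longrightarrow> chr r a (neg x) y = cnj (chr r a x y)"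
  by (metis chr_commute chr_gneg_right)

lemma chr_nontrivial:
  assumes "x \<in> G" and "x \<noteq> gzero"
  obtains t where "t \<in> G" and "chr r a t x \<noteq> 1"
proof -
  obtain k where "x k \<noteq> 0" using \<open>x \<noteq> gzero\<close> by (auto simp: gzero_def)
  with \<open>x \<in> G\<close> have "k < r"
    by (cases "k < r") (auto simp: grp_def)
  with \<open>x \<in> G\<close> have "x k < a k"
    by (auto simp: grp_def)
  define t where "t = (\<lambda>j. if j = k then 1 else 0 :: nat)"
  have "t \<in> G"
    using moduli_pos \<open>k < r\<close> \<open>x k < a k\<close> \<open>x k \<noteq> 0\<close> by (auto simp: t_def grp_def)
  have "(\<Sum>j<r. real (t j * x j) / real (a j)) = (\<Sum>j<r. if j = k then real (x k) / real (a k) else 0)"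
    by (intro sum.cong) (auto simp: t_def)
  also have "\<dots> = real (x k) / real (a k)"
    using \<open>k < r\<close> by simp
  finally have "(\<Sum>j<r. real (t j * x j) / real (a j)) = real (x k) / real (a k)" .
  then have "chr r a t x = exp (2 * of_real pi * \<i> * of_nat (x k) / of_nat (a k))"
    by (simp add: chr_def)
  moreover have "\<not> a k dvd x k"
    using \<open>x k \<noteq> 0\<close> \<open>x k < a k\<close> by (auto dest: dvd_imp_le)
  ultimately have "chr r a t x \<noteq> 1"
    using complex_root_unity_eq_1[of "a k" "x k"] \<open>x k < a k\<close> by simp
  with \<open>t \<in> G\<close> show ?thesis by (rule that)
qed

lemma sum_chr:
  assumes "x \<in> G"
  shows "(\<Sum>\<xi>\<in>G. chr r a \<xi> x) = (if x = gzero then of_nat (card G) else 0)"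
proof (cases "x = gzero")
  case False
  then obtain t where "t \<in> G" "chr r a t x \<noteq> 1"
    using chr_nontrivial \<open>x \<in> G\<close> by blast
  then show ?thesis
    using sum_grp_mult_hom_eq_0[of "\<lambda>\<xi>. chr r a \<xi> x"] False by (simp add: chr_gadd_left)
qed simp

lemma dft_inversion:
  assumes "x \<in> G"
  shows "(\<Sum>\<xi>\<in>G. dft r a h \<xi> * chr r a \<xi> x) = of_nat (card G) * h x"
proof -
  have "(\<Sum>\<xi>\<in>G. dft r a h \<xi> * chr r a \<xi> x) = (\<Sum>\<xi>\<in>G. \<Sum>y\<in>G. h y * chr r a \<xi> (add x (neg y)))"
    unfolding dft_def sum_distrib_right
    by (intro sum.cong refl) (simp add: chr_gadd_right chr_gneg_right mult_ac)
  also have "\<dots> = (\<Sum>y\<in>G. h y * (\<Sum>\<xi>\<in>G. chr r a \<xi> (add x (neg y))))"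
    by (subst sum.swap) (simp add: sum_distrib_left)
  also have "\<dots> = (\<Sum>y\<in>G. if y = x then h x * of_nat (card G) else 0)"
    using \<open>x \<in> G\<close> by (intro sum.cong refl) (auto simp: sum_chr gadd_in_grp gadd_gneg_eq_gzero_iff)
  also have "\<dots> = of_nat (card G) * h x"
    using \<open>x \<in> G\<close> finite_grp by simp
  finally show ?thesis .
qed

lemma dft_eq_0_imp_eq_0:
  assumes "\<forall>\<xi>\<in>G. dft r a h \<xi> = 0" and "x \<in> G"
  shows "h x = 0"
proof -
  have "card G \<noteq> 0"
    using finite_grp gzero_in_grp by auto
  with dft_inversion[OF \<open>x \<in> G\<close>, of h] assms(1) show ?thesis
    by simp
qed

lemma dft_diff: "dft r a (\<lambda>x. f x - g x) \<xi> = dft r a f \<xi> - dft r a g \<xi>"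
  by (simp add: dft_def sum_subtractf left_diff_distrib)

lemma dft_translate:
  assumes "y \<in> G"
  shows "dft r a (\<lambda>x. f (add x y)) \<xi> = chr r a \<xi> y * dft r a f \<xi>"
proof -
  have "dft r a f \<xi> = (\<Sum>x\<in>G. f (add x y) * cnj (chr r a \<xi> (add x y)))"
    unfolding dft_def by (rule sum_grp_translate[OF assms, symmetric])
  also have "\<dots> = cnj (chr r a \<xi> y) * dft r a (\<lambda>x. f (add x y)) \<xi>"
    unfolding dft_def sum_distrib_left by (intro sum.cong refl) (simp add: chr_gadd_right)
  finally show ?thesis
    by (simp add: mult.assoc[symmetric])
qed

lemma mult_hom_eq_chr:
  assumes hom: "\<forall>x\<in>G. \<forall>y\<in>G. u (add x y) = u x * u y" and "u gzero = 1"
  shows "\<exists>y\<in>G. \<forall>\<xi>\<in>G. u \<xi> = chr r a \<xi> y"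
proof (rule ccontr)
  assume no_chr: "\<not> ?thesis"
  have "dft r a u y = 0" if "y \<in> G" for y
  proof -
    obtain t where "t \<in> G" and "u t \<noteq> chr r a t y"
      using no_chr \<open>y \<in> G\<close> by blast
    define v where "v \<xi> = u \<xi> * cnj (chr r a \<xi> y)" for \<xi>
    have v_mult: "\<forall>\<xi>\<in>G. \<forall>\<eta>\<in>G. v (add \<xi> \<eta>) = v \<xi> * v \<eta>"
      using hom by (simp add: v_def chr_gadd_left mult_ac)
    have "u t = v t * chr r a t y"
      by (simp add: v_def mult.assoc)
    with \<open>u t \<noteq> chr r a t y\<close> have "v t \<noteq> 1"
      by auto
    with v_mult \<open>t \<in> G\<close> have "(\<Sum>\<xi>\<in>G. v \<xi>) = 0"
      by (rule sum_grp_mult_hom_eq_0)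
    then show ?thesis
      by (simp add: dft_def v_def chr_commute)
  qed
  then have "u gzero = 0"
    using dft_eq_0_imp_eq_0 gzero_in_grp by blast
  with \<open>u gzero = 1\<close> show False by simp
qed

lemma autocorr_Nil: "autocorr r a f [] = dft r a f gzero"
  by (simp add: autocorr_def dft_def)

lemma double_dft_triple_autocorr:
  "(\<Sum>x\<^sub>1\<in>G. \<Sum>x\<^sub>2\<in>G. autocorr r a f [x\<^sub>1, x\<^sub>2] * cnj (chr r a \<xi>\<^sub>1 x\<^sub>1) * cnj (chr r a \<xi>\<^sub>2 x\<^sub>2))
    = dft r a f \<xi>\<^sub>1 * dft r a f \<xi>\<^sub>2 * dft r a f (neg (add \<xi>\<^sub>1 \<xi>\<^sub>2))"
proof -
  define T where "T x\<^sub>1 x\<^sub>2 y =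
    f y * (f (add x\<^sub>1 y) * cnj (chr r a \<xi>\<^sub>1 x\<^sub>1)) * (f (add x\<^sub>2 y) * cnj (chr r a \<xi>\<^sub>2 x\<^sub>2))" for x\<^sub>1 x\<^sub>2 y
  have "(\<Sum>x\<^sub>1\<in>G. \<Sum>x\<^sub>2\<in>G. autocorr r a f [x\<^sub>1, x\<^sub>2] * cnj (chr r a \<xi>\<^sub>1 x\<^sub>1) * cnj (chr r a \<xi>\<^sub>2 x\<^sub>2))
      = (\<Sum>x\<^sub>1\<in>G. \<Sum>x\<^sub>2\<in>G. \<Sum>y\<in>G. T x\<^sub>1 x\<^sub>2 y)"
    unfolding autocorr_def T_def
    by (intro sum.cong refl) (simp add: sum_distrib_left sum_distrib_right gadd_commute mult_ac)
  also have "\<dots> = (\<Sum>x\<^sub>1\<in>G. \<Sum>y\<in>G. \<Sum>x\<^sub>2\<in>G. T x\<^sub>1 x\<^sub>2 y)"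
    by (rule sum.cong[OF refl], rule sum.swap)
  also have "\<dots> = (\<Sum>y\<in>G. \<Sum>x\<^sub>1\<in>G. \<Sum>x\<^sub>2\<in>G. T x\<^sub>1 x\<^sub>2 y)"
    by (rule sum.swap)
  also have "\<dots> = (\<Sum>y\<in>G. f y * dft r a (\<lambda>x. f (add x y)) \<xi>\<^sub>1 * dft r a (\<lambda>x. f (add x y)) \<xi>\<^sub>2)"
    unfolding T_def dft_def by (simp add: sum_distrib_left sum_distrib_right mult_ac)
  also have "\<dots> = dft r a f \<xi>\<^sub>1 * dft r a f \<xi>\<^sub>2 * (\<Sum>y\<in>G. f y * chr r a (add \<xi>\<^sub>1 \<xi>\<^sub>2) y)"
    by (simp add: dft_translate chr_gadd_left sum_distrib_left mult_ac)
  also have "\<dots> = dft r a f \<xi>\<^sub>1 * dft r a f \<xi>\<^sub>2 * dft r a f (neg (add \<xi>\<^sub>1 \<xi>\<^sub>2))"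
    by (simp add: dft_def chr_gneg_left gadd_in_grp)
  finally show ?thesis .
qed

lemma bispectrum_eq_imp_ratio_mult:
  fixes F H :: "(nat \<Rightarrow> nat) \<Rightarrow> complex"
  assumes F_nz: "\<forall>p\<in>G. F p \<noteq> 0" and "F gzero = H gzero"
    and bisp: "\<forall>p\<in>G. \<forall>q\<in>G. F p * F q * F (neg (add p q)) = H p * H q * H (neg (add p q))"
  shows "\<forall>p\<in>G. \<forall>q\<in>G. H (add p q) / F (add p q) = H p / F p * (H q / F q)"
proof (intro ballI)
  fix p q assume "p \<in> G" "q \<in> G"
  define s where "s = add p q"
  have "s \<in> G" "neg s \<in> G"
    by (simp_all add: s_def gadd_in_grp gneg_in_grp)
  have "F s * F gzero * F (neg s) = H s * H gzero * H (neg s)"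
    using bisp[rule_format, OF \<open>s \<in> G\<close> gzero_in_grp] by (simp add: gadd_gzero \<open>s \<in> G\<close>)
  moreover have "F gzero \<noteq> 0"
    using F_nz gzero_in_grp by blast
  ultimately have diag: "F s * F (neg s) = H s * H (neg s)"
    using \<open>F gzero = H gzero\<close> by (simp add: mult_ac)
  have "F s * F (neg s) \<noteq> 0"
    using F_nz \<open>s \<in> G\<close> \<open>neg s \<in> G\<close> by simp
  with diag have "H (neg s) \<noteq> 0" by auto
  have "H s / F s = F (neg s) / H (neg s)"
    using diag F_nz \<open>s \<in> G\<close> \<open>H (neg s) \<noteq> 0\<close> by (simp add: frac_eq_eq ac_simps)
  also have "\<dots> = H p / F p * (H q / F q)"
    using bisp F_nz \<open>p \<in> G\<close> \<open>q \<in> G\<close> \<open>H (neg s) \<noteq> 0\<close>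
    by (simp add: s_def frac_eq_eq ac_simps)
  finally show "H (add p q) / F (add p q) = H p / F p * (H q / F q)"
    by (simp add: s_def)
qed

lemma translate_if_autocorr_eq:
  assumes F_nz: "\<forall>\<xi>\<in>G. dft r a f \<xi> \<noteq> 0"
    and M1: "autocorr r a f [] = autocorr r a g []"
    and M3: "\<forall>x\<^sub>1\<in>G. \<forall>x\<^sub>2\<in>G. autocorr r a f [x\<^sub>1, x\<^sub>2] = autocorr r a g [x\<^sub>1, x\<^sub>2]"
  shows "\<exists>y\<in>G. \<forall>x\<in>G. g x = f (add x y)"
proof -
  have bisp: "\<forall>p\<in>G. \<forall>q\<in>G. dft r a f p * dft r a f q * dft r a f (neg (add p q)) =
                      dft r a g p * dft r a g q * dft r a g (neg (add p q))"
    unfolding double_dft_triple_autocorr[symmetric] using M3 by simp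
  have "dft r a f gzero = dft r a g gzero"
    using M1 by (simp add: autocorr_Nil)
  with F_nz have "\<forall>p\<in>G. \<forall>q\<in>G. dft r a g (add p q) / dft r a f (add p q) =
                     dft r a g p / dft r a f p * (dft r a g q / dft r a f q)"
    using bisp by (rule bispectrum_eq_imp_ratio_mult)
  moreover have "dft r a g gzero / dft r a f gzero = 1"
    using \<open>dft r a f gzero = dft r a g gzero\<close> F_nz gzero_in_grp by (metis divide_self)
  ultimately obtain y where "y \<in> G" and y: "\<forall>\<xi>\<in>G. dft r a g \<xi> / dft r a f \<xi> = chr r a \<xi> y"
    using mult_hom_eq_chr[of "\<lambda>\<xi>. dft r a g \<xi> / dft r a f \<xi>"] by blast
  have "\<forall>\<xi>\<in>G. dft r a (\<lambda>x. g x - f (add x y)) \<xi> = 0"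
    using y F_nz by (simp add: dft_diff dft_translate[OF \<open>y \<in> G\<close>] divide_eq_eq)
  with \<open>y \<in> G\<close> show ?thesis
    using dft_eq_0_imp_eq_0[of "\<lambda>x. g x - f (add x y)"] by auto
qed

lemma translate_inverse:
  assumes "y \<in> G" and "\<forall>x\<in>G. f x = g (add x y)"
  shows "\<forall>x\<in>G. g x = f (add x (neg y))"
  using assms by (metis gadd_gneg_cancel gadd_in_grp)

end

theorem theorem1:
  fixes r :: nat and a :: "nat \<Rightarrow> nat" and f g :: "(nat \<Rightarrow> nat) \<Rightarrow> complex"
  assumes apos: "\<forall>k<r. a k > 0"
    and nz: "(\<forall>x\<in>grp r a. dft r a f x \<noteq> 0) \<or> (\<forall>x\<in>grp r a. dft r a g x \<noteq> 0)"
    and M: "\<forall>n\<in>{1,2,3}. \<forall>xs. length xs = n - 1 \<and> set xs \<subseteq> grp r a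
              \<longrightarrow> autocorr r a f xs = autocorr r a g xs"
  shows "\<exists>y\<in>grp r a. \<forall>x\<in>grp r a. g x = f (gadd r a x y)"
proof -
  interpret cyclic_product r a
    using apos by unfold_locales
  have M1: "autocorr r a f [] = autocorr r a g []"
    using M by auto
  have M3: "\<forall>x\<^sub>1\<in>G. \<forall>x\<^sub>2\<in>G. autocorr r a f [x\<^sub>1, x\<^sub>2] = autocorr r a g [x\<^sub>1, x\<^sub>2]"
    using M by (auto dest!: bspec[of _ _ 3])
  from nz show ?thesis
  proof
    assume "\<forall>x\<in>G. dft r a f x \<noteq> 0"
    then show ?thesis
      using M1 M3 by (rule translate_if_autocorr_eq)
  next
    assume "\<forall>x\<in>G. dft r a g x \<noteq> 0"
    moreover have "\<forall>x\<^sub>1\<in>G. \<forall>x\<^sub>2\<in>G. autocorr r a g [x\<^sub>1, x\<^sub>2] = autocorr r a f [x\<^sub>1, x\<^sub>2]"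
      using M3 by simp
    ultimately obtain y where "y \<in> G" "\<forall>x\<in>G. f x = g (add x y)"
      using translate_if_autocorr_eq[OF _ M1[symmetric]] by blast
    then show ?thesis
      using translate_inverse gneg_in_grp by blast
  qed
qed

end
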